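(* Suppose that a group $G$ has a non-elementary action by isometries on a geodesic $\delta$-hyperbolic space $X$, and that $G$ contains a WPD element. Let $o\in X$. For any $0<\eta<1$ there exists $C>0$ such that for any $D>0$ and any $K>0$ there is a finite set $S\subseteq G$ which is $(\eta,C,D)$-Schottky and such that for every $s\in S$ the coarse joint stabilizer $\mathrm{Stab}_K(o,so)$ is finite.
   Context: Gromov product $(x,y)_z=\frac12(d(x,z)+d(y,z)-d(x,y))$. A finite set $S$ is $(\eta,C,D)$-Schottky if for all $x,y\in X$, $\#\{s\in S:(x,sy)_o\le C\}\ge(1-\eta)\#S$ and $\#\{s\in S:(x,s^{-1}y)_o\le C\}\ge(1-\eta)\#S$, and $d(o,so)\ge D$ for all $s\in S$. $\mathrm{Stab}_K(x,y)=\{g\in G:d(x,gx)\le K,\ d(y,gy)\le K\}$. An element $g$ is loxodromic if $\lim_n d(g^no,o)/n>0$; it is WPD if it is loxodromic and for any $x\in X$, $K\ge0$ there is $P\ge1$ with $\mathrm{Stab}_K(x,g^Px)$ finite. The action is non-elementary if there are two loxodromic elements with disjoint fixed sets in $\partial X$. *)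

theory Defs
  imports Complex_Main "HOL-Algebra.Group"
begin

definition gromov :: "'x::metric_space \<Rightarrow> 'x \<Rightarrow> 'x \<Rightarrow> real" where
  "gromov x y z = (dist x z + dist y z - dist x y) / 2"

definition geodesic_space :: "'x::metric_space itself \<Rightarrow> bool" where
  "geodesic_space _ \<longleftrightarrow> (\<forall>x y::'x. \<exists>\<gamma>::real \<Rightarrow> 'x. \<gamma> 0 = x \<and> \<gamma> (dist x y) = y \<and>
      (\<forall>s\<in>{0..dist x y}. \<forall>t\<in>{0..dist x y}. dist (\<gamma> s) (\<gamma> t) = \<bar>s - t\<bar>))"

definition hyperbolic :: "'x::metric_space itself \<Rightarrow> real \<Rightarrow> bool" where
  "hyperbolic _ \<delta> \<longleftrightarrow> \<delta> \<ge> 0 \<and>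
     (\<forall>x y z w::'x. gromov x y w \<ge> min (gromov x z w) (gromov y z w) - \<delta>)"

definition isometric_action :: "('g, 'b) monoid_scheme \<Rightarrow> ('g \<Rightarrow> 'x::metric_space \<Rightarrow> 'x) \<Rightarrow> bool" where
  "isometric_action G act \<longleftrightarrow>
     (\<forall>x. act \<one>\<^bsub>G\<^esub> x = x) \<and>
     (\<forall>g\<in>carrier G. \<forall>h\<in>carrier G. \<forall>x. act (g \<otimes>\<^bsub>G\<^esub> h) x = act g (act h x)) \<and>
     (\<forall>g\<in>carrier G. \<forall>x y. dist (act g x) (act g y) = dist x y)"

definition loxodromic :: "('g, 'b) monoid_scheme \<Rightarrow> ('g \<Rightarrow> 'x::metric_space \<Rightarrow> 'x) \<Rightarrow> 'x \<Rightarrow> 'g \<Rightarrow> bool" where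
  "loxodromic G act x0 g \<longleftrightarrow> g \<in> carrier G \<and>
     (\<exists>L>0. (\<lambda>n::nat. dist (act (g [^]\<^bsub>G\<^esub> n) x0) x0 / real n) \<longlonglongrightarrow> L)"

definition Stab :: "('g, 'b) monoid_scheme \<Rightarrow> ('g \<Rightarrow> 'x::metric_space \<Rightarrow> 'x) \<Rightarrow> real \<Rightarrow> 'x \<Rightarrow> 'x \<Rightarrow> 'g set" where
  "Stab G act K x y = {g \<in> carrier G. dist x (act g x) \<le> K \<and> dist y (act g y) \<le> K}"

definition WPD :: "('g, 'b) monoid_scheme \<Rightarrow> ('g \<Rightarrow> 'x::metric_space \<Rightarrow> 'x) \<Rightarrow> 'x \<Rightarrow> 'g \<Rightarrow> bool" where
  "WPD G act x0 g \<longleftrightarrow> loxodromic G act x0 g \<and>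
     (\<forall>x K. K \<ge> 0 \<longrightarrow> (\<exists>P::nat. P \<ge> 1 \<and> finite (Stab G act K x (act (g [^]\<^bsub>G\<^esub> P) x))))"

text \<open>Sequential Gromov boundary: sequences converging at infinity, up to equivalence.\<close>
definition conv_inf :: "'x::metric_space \<Rightarrow> (nat \<Rightarrow> 'x) \<Rightarrow> bool" where
  "conv_inf x0 \<xi> \<longleftrightarrow> (\<forall>M. \<exists>N. \<forall>n\<ge>N. \<forall>m\<ge>N. gromov (\<xi> n) (\<xi> m) x0 \<ge> M)"

definition bd_equiv :: "'x::metric_space \<Rightarrow> (nat \<Rightarrow> 'x) \<Rightarrow> (nat \<Rightarrow> 'x) \<Rightarrow> bool" where
  "bd_equiv x0 \<xi> \<zeta> \<longleftrightarrow> (\<forall>M. \<exists>N. \<forall>n\<ge>N. \<forall>m\<ge>N. gromov (\<xi> n) (\<zeta> m) x0 \<ge> M)"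

definition bd_fixed :: "('g \<Rightarrow> 'x::metric_space \<Rightarrow> 'x) \<Rightarrow> 'x \<Rightarrow> 'g \<Rightarrow> (nat \<Rightarrow> 'x) \<Rightarrow> bool" where
  "bd_fixed act x0 g \<xi> \<longleftrightarrow> conv_inf x0 \<xi> \<and> bd_equiv x0 (\<lambda>n. act g (\<xi> n)) \<xi>"

definition non_elementary :: "('g, 'b) monoid_scheme \<Rightarrow> ('g \<Rightarrow> 'x::metric_space \<Rightarrow> 'x) \<Rightarrow> 'x \<Rightarrow> bool" where
  "non_elementary G act x0 \<longleftrightarrow> (\<exists>g h. loxodromic G act x0 g \<and> loxodromic G act x0 h \<and>
     \<not> (\<exists>\<xi>. bd_fixed act x0 g \<xi> \<and> bd_fixed act x0 h \<xi>))"

definition schottky :: "('g, 'b) monoid_scheme \<Rightarrow> ('g \<Rightarrow> 'x::metric_space \<Rightarrow> 'x) \<Rightarrow> 'x \<Rightarrow> real \<Rightarrow> real \<Rightarrow> real \<Rightarrow> 'g set \<Rightarrow> bool" where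
  "schottky G act x0 \<eta> C D S \<longleftrightarrow> finite S \<and> S \<noteq> {} \<and> S \<subseteq> carrier G \<and>
     (\<forall>x y. real (card {s\<in>S. gromov x (act s y) x0 \<le> C}) \<ge> (1 - \<eta>) * real (card S) \<and>
            real (card {s\<in>S. gromov x (act (inv\<^bsub>G\<^esub> s) y) x0 \<le> C}) \<ge> (1 - \<eta>) * real (card S)) \<and>
     (\<forall>s\<in>S. dist x0 (act s x0) \<ge> D)"

end

theory Submission
  imports Defs
begin

text \<open>Orbits of a loxodromic element are quasi-geodesics; in a four-point hyperbolic space this
  follows from a local-to-global argument for chains with long steps and small turns. Since the
  action is non-elementary, there is a loxodromic \<open>f\<^sub>1\<close> both of whose orbits diverge from the
  forward orbit of \<open>g\<close> (otherwise every loxodromic would fix its endpoint), and likewise \<open>f\<^sub>2\<close> for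
  \<open>g\<inverse>\<close>; powers \<open>u\<^sub>i\<close> of \<open>f\<^sub>1\<close> (\<open>v\<^sub>i\<close> of \<open>f\<^sub>2\<close>) of rapidly growing displacement move the forward
  orbit of \<open>g\<close> (of \<open>g\<inverse>\<close>) into pairwise diverging directions. For the WPD
  element \<open>g\<close> and large \<open>n\<close>, the elements \<open>s\<^sub>i = u\<^sub>i g\<^sup>n v\<^sub>i\<inverse>\<close> then have pairwise small Gromov
  products at \<open>o\<close> both for the points \<open>s\<^sub>i o\<close> and \<open>s\<^sub>i\<inverse> o\<close>. By the four-point condition, for any
  \<open>x, y\<close> at most two of them violate \<open>(x, s\<^sub>i y)\<^sub>o \<le> C\<close>, so \<open>N \<ge> 2/\<eta>\<close> of them form a Schottky set,
  and \<open>Stab\<^sub>K(o, s\<^sub>i o)\<close> is conjugate into the finite set \<open>Stab\<^sub>K\<^sub>'(o, g\<^sup>n o)\<close>.\<close>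

lemma gromov_commute: "gromov x y w = gromov y x w"
  unfolding gromov_def by (simp add: dist_commute)

lemma gromov_nonneg: "0 \<le> gromov x y w"
  unfolding gromov_def using dist_triangle[of x y w] by (simp add: dist_commute)

lemma gromov_le_dist: "gromov x y w \<le> dist x w"
  unfolding gromov_def using dist_triangle[of y w x] by (simp add: dist_commute)

lemma gromov_add_gromov: "gromov x y w + gromov w y x = dist w x"
  unfolding gromov_def by (simp add: dist_commute field_simps)

lemma gromov_base_left [simp]: "gromov w y w = 0"
  unfolding gromov_def by (simp add: dist_commute)

lemma gromov_base_right [simp]: "gromov x w w = 0"
  unfolding gromov_def by (simp add: dist_commute)

lemma gromov_same [simp]: "gromov x x w = dist x w"
  unfolding gromov_def by (simp add: dist_commute)

lemma gromov_le_perturb: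
  "gromov x y w \<le> gromov x' y' w' + dist x x' + dist y y' + dist w w'"
proof -
  have "dist x w \<le> dist x' w' + dist x x' + dist w w'"
    using dist_triangle[of x w x'] dist_triangle[of x' w w'] by (simp add: dist_commute)
  moreover have "dist y w \<le> dist y' w' + dist y y' + dist w w'"
    using dist_triangle[of y w y'] dist_triangle[of y' w w'] by (simp add: dist_commute)
  moreover have "dist x' y' \<le> dist x y + dist x x' + dist y y'"
    using dist_triangle[of x' y' x] dist_triangle[of x y' y] by (simp add: dist_commute)
  ultimately show ?thesis unfolding gromov_def by (simp add: field_simps)
qed

lemma gromov_le_move_base: "gromov x y w \<le> gromov x y w' + dist w w'"
  using gromov_le_perturb[of x y w x y w'] by simp

lemma dist_triangle_3: "dist a d \<le> dist a b + dist b c + dist c d"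
  using dist_triangle[of a d b] dist_triangle[of b d c] by linarith

lemma inj_on_if_gromov_lt_dist:
  assumes "\<And>i j. i \<in> I \<Longrightarrow> j \<in> I \<Longrightarrow> i \<noteq> j \<Longrightarrow> gromov (P i) (P j) w \<le> c"
    and "\<And>i. i \<in> I \<Longrightarrow> c < dist (P i) w"
  shows "inj_on P I"
proof (rule inj_onI, rule ccontr)
  fix i j assume "i \<in> I" "j \<in> I" "P i = P j" "i \<noteq> j"
  then show False
    using assms(1)[of i j] assms(2)[of i] by simp
qed

lemma linear_growth_spaced_subseq:
  fixes h :: "nat \<Rightarrow> real"
  assumes L: "0 < L" "\<And>n. L * real n \<le> h n" and M: "0 < M"
  shows "\<exists>t::nat \<Rightarrow> nat. \<forall>i j. i < j \<longrightarrow> t i \<le> t j \<and> h (t i) + M \<le> h (t j)"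
proof -
  define t where "t = rec_nat 0 (\<lambda>_ ti. nat \<lceil>(h ti + M) / L\<rceil>)"
  have step: "t i \<le> t (Suc i) \<and> h (t i) + M \<le> h (t (Suc i))" for i
  proof -
    have "(h (t i) + M) / L \<le> real (t (Suc i))"
      unfolding t_def by simp linarith
    then have next_ge: "h (t i) + M \<le> L * real (t (Suc i))"
      using L(1) by (simp add: field_simps)
    then have "L * real (t i) \<le> L * real (t (Suc i))"
      using L(2)[of "t i"] M by linarith
    then have "t i \<le> t (Suc i)"
      using L(1) by (simp add: mult_le_cancel_left_pos)
    moreover have "h (t i) + M \<le> h (t (Suc i))"
      using next_ge L(2)[of "t (Suc i)"] by linarith
    ultimately show ?thesis ..
  qed
  have "t i \<le> t j \<and> h (t i) + M \<le> h (t j)" if "i < j" for i j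
  proof
    show "t i \<le> t j"
      using lift_Suc_mono_le[of t] step that by simp
    have "h (t n) \<le> h (t (Suc n))" for n
      using step[of n] M by linarith
    then have "h (t (Suc i)) \<le> h (t j)"
      using lift_Suc_mono_le[of "\<lambda>i. h (t i)"] that by simp
    then show "h (t i) + M \<le> h (t j)"
      using step[of i] by linarith
  qed
  then show ?thesis by blast
qed

locale hyperbolic_space =
  fixes \<delta> :: real
  assumes hyperbolic: "hyperbolic TYPE('x::metric_space) \<delta>"
begin

lemma delta_nonneg: "0 \<le> \<delta>"
  using hyperbolic unfolding hyperbolic_def by simp

lemma four_point: "gromov (x::'x) y w \<ge> min (gromov x z w) (gromov y z w) - \<delta>"
  using hyperbolic unfolding hyperbolic_def by blast

lemma four_point_ge:
  assumes "a \<le> gromov x z w" and "a \<le> gromov y z w"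
  shows "a - \<delta> \<le> gromov (x::'x) y w"
proof -
  have "a \<le> min (gromov x z w) (gromov y z w)"
    using assms by simp
  then show ?thesis
    using four_point[of x z w y] by linarith
qed

lemma four_point_le:
  assumes "gromov x y w \<le> c" and "c + \<delta> < gromov y z w"
  shows "gromov (x::'x) z w \<le> c + \<delta>"
proof (rule ccontr)
  assume "\<not> ?thesis"
  then have "c + \<delta> < min (gromov x z w) (gromov y z w)"
    using assms(2) by simp
  then show False
    using four_point[of x z w y] assms(1) by linarith
qed

lemma chain_gromov_from_start:
  fixes x :: "nat \<Rightarrow> 'x"
  assumes step: "\<And>i. i + 1 \<le> N \<Longrightarrow> A \<le> dist (x i) (x (i + 1))"
    and turn: "\<And>i. i + 2 \<le> N \<Longrightarrow> gromov (x i) (x (i + 2)) (x (i + 1)) \<le> c"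
    and A: "2 * c + 2 * \<delta> < A"
    and n: "1 \<le> n" "n + 1 \<le> N"
  shows "gromov (x 0) (x (n + 1)) (x n) \<le> c + \<delta>"
  using n
proof (induction n)
  case 0
  then show ?case by simp
next
  case (Suc n)
  show ?case
  proof (cases "n = 0")
    case True
    then show ?thesis using turn[of 0] Suc.prems delta_nonneg by simp
  next
    case False
    have "gromov (x 0) (x (n + 1)) (x n) \<le> c + \<delta>"
      using Suc.IH Suc.prems False by simp
    then have "gromov (x (n + 1)) (x 0) (x n) \<le> c + \<delta>"
      using gromov_commute[of "x 0" "x (n + 1)"] by simp
    moreover have "gromov (x n) (x 0) (x (n + 1)) + gromov (x (n + 1)) (x 0) (x n) = dist (x (n + 1)) (x n)"
      by (rule gromov_add_gromov)
    moreover have "A \<le> dist (x (n + 1)) (x n)"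
      using step[of n] Suc.prems by (simp add: dist_commute)
    ultimately have "c + \<delta> < gromov (x n) (x 0) (x (n + 1))"
      using A by linarith
    moreover have "gromov (x (n + 2)) (x n) (x (n + 1)) \<le> c"
      using turn[of n] Suc.prems by (simp add: gromov_commute)
    ultimately have "gromov (x (n + 2)) (x 0) (x (n + 1)) \<le> c + \<delta>"
      using four_point_le by blast
    then show ?thesis by (simp add: gromov_commute numeral_2_eq_2)
  qed
qed

lemma chain_gromov_from_end:
  fixes x :: "nat \<Rightarrow> 'x"
  assumes step: "\<And>i. i + 1 \<le> m \<Longrightarrow> A \<le> dist (x i) (x (i + 1))"
    and turn: "\<And>i. i + 2 \<le> m \<Longrightarrow> gromov (x i) (x (i + 2)) (x (i + 1)) \<le> c"
    and A: "2 * c + 2 * \<delta> < A"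
    and j: "j + 2 \<le> m"
  shows "gromov (x j) (x m) (x (j + 1)) \<le> c + \<delta>"
proof -
  define y where "y i = x (m - i)" for i
  have step_y: "A \<le> dist (y i) (y (i + 1))" if "i + 1 \<le> m" for i
    using step[of "m - (i + 1)"] that by (simp add: y_def dist_commute Suc_diff_Suc)
  have turn_y: "gromov (y i) (y (i + 2)) (y (i + 1)) \<le> c" if "i + 2 \<le> m" for i
  proof -
    define k where "k = m - (i + 2)"
    have "m - i = k + 2" "m - (i + 1) = k + 1"
      using that by (simp_all add: k_def)
    moreover have "gromov (x k) (x (k + 2)) (x (k + 1)) \<le> c"
      using turn[of k] that by (simp add: k_def)
    ultimately show ?thesis
      unfolding y_def k_def[symmetric] using gromov_commute[of "x k" "x (k + 2)"] by simp
  qed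
  have "gromov (y 0) (y (m - j - 1 + 1)) (y (m - j - 1)) \<le> c + \<delta>"
    using chain_gromov_from_start[OF step_y turn_y A, where n = "m - j - 1"] j by simp
  moreover have "m - (m - j - 1 + 1) = j" "m - (m - j - 1) = j + 1"
    using j by simp_all
  ultimately show ?thesis
    unfolding y_def by (simp add: gromov_commute)
qed

lemma chain_gromov_le:
  fixes x :: "nat \<Rightarrow> 'x"
  assumes step: "\<And>i. i + 1 \<le> m \<Longrightarrow> A \<le> dist (x i) (x (i + 1))"
    and turn: "\<And>i. i + 2 \<le> m \<Longrightarrow> gromov (x i) (x (i + 2)) (x (i + 1)) \<le> c"
    and A: "2 * c + 3 * \<delta> < A"
    and j: "0 < j" "j < m"
  shows "gromov (x 0) (x m) (x j) \<le> c + 2 * \<delta>"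
proof -
  have A': "2 * c + 2 * \<delta> < A"
    using A delta_nonneg by linarith
  have start: "gromov (x 0) (x (j + 1)) (x j) \<le> c + \<delta>"
    using chain_gromov_from_start[OF step turn A', where n = j] j by simp
  show ?thesis
  proof (cases "m = j + 1")
    case True
    then show ?thesis using start delta_nonneg by simp
  next
    case False
    then have "gromov (x j) (x m) (x (j + 1)) \<le> c + \<delta>"
      using chain_gromov_from_end[OF step turn A'] j by simp
    moreover have "gromov (x (j + 1)) (x m) (x j) + gromov (x j) (x m) (x (j + 1)) = dist (x j) (x (j + 1))"
      by (rule gromov_add_gromov)
    moreover have "A \<le> dist (x j) (x (j + 1))"
      using step[of j] j by simp
    ultimately have "c + \<delta> + \<delta> < gromov (x (j + 1)) (x m) (x j)"
      using A by linarith
    then have "gromov (x 0) (x m) (x j) \<le> c + \<delta> + \<delta>"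
      by (rule four_point_le[OF start])
    then show ?thesis
      by simp
  qed
qed

lemma dist_le_if_similar_position:
  fixes x y y' z :: 'x
  assumes "gromov x z y \<le> c" "dist x y' \<le> dist x y + K" "dist x y \<le> dist x y' + K"
    "dist z y' \<le> dist z y + K"
  shows "dist y y' \<le> 3 * K + 2 * c + 2 * \<delta>"
proof -
  have e1: "gromov y z x = dist x y - gromov x z y"
    using gromov_add_gromov[of y z x] by simp
  have e2: "gromov y' z x = dist x y' - gromov x z y'"
    using gromov_add_gromov[of y' z x] by simp
  have e3: "gromov x z y' \<le> gromov x z y + K"
    unfolding gromov_def using assms(2,4) by (simp add: field_simps)
  have e4: "dist y y' = dist x y + dist x y' - 2 * gromov y y' x"
    unfolding gromov_def by (simp add: dist_commute field_simps)
  have h: "gromov y y' x \<ge> min (gromov y z x) (gromov y' z x) - \<delta>"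
    by (rule four_point)
  show ?thesis
  proof (cases "gromov y z x \<le> gromov y' z x")
    case True
    then show ?thesis using h e1 e4 assms(1,2,3) by (simp add: min_def)
  next
    case False
    then show ?thesis using h e2 e3 e4 assms(1,2,3) by (simp add: min_def)
  qed
qed

lemma card_gromov_gt_le_1:
  assumes "finite S"
    and sep: "\<And>a b. a \<in> S \<Longrightarrow> b \<in> S \<Longrightarrow> a \<noteq> b \<Longrightarrow> gromov (P a) (P b) w \<le> T - \<delta>"
  shows "card {s \<in> S. T < gromov (z::'x) (P s) w} \<le> 1"
proof -
  have "a = b" if "a \<in> S" "b \<in> S" "T < gromov z (P a) w" "T < gromov z (P b) w" for a b
  proof (rule ccontr)
    assume "a \<noteq> b"
    then have "gromov (P a) z w \<le> T - \<delta> + \<delta>"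
      using four_point_le[OF sep] that by (simp add: gromov_commute)
    then show False
      using that by (simp add: gromov_commute)
  qed
  then show ?thesis
    using assms(1) by (simp add: card_le_Suc0_iff_eq)
qed

lemma card_gromov_le_ge:
  assumes "finite S"
    and bad: "\<And>s. s \<in> S \<Longrightarrow> C < gromov x (F s) w \<Longrightarrow> T < gromov x (P s) w \<or> T < gromov y (Q s) w"
    and sep_P: "\<And>a b. a \<in> S \<Longrightarrow> b \<in> S \<Longrightarrow> a \<noteq> b \<Longrightarrow> gromov (P a) (P b) w \<le> T - \<delta>"
    and sep_Q: "\<And>a b. a \<in> S \<Longrightarrow> b \<in> S \<Longrightarrow> a \<noteq> b \<Longrightarrow> gromov (Q a) (Q b) w \<le> T - \<delta>"
  shows "real (card S) - 2 \<le> real (card {s \<in> S. gromov (x::'x) (F s) w \<le> C})"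
proof -
  have "S \<subseteq> {s \<in> S. gromov x (F s) w \<le> C} \<union> {s \<in> S. T < gromov x (P s) w}
      \<union> {s \<in> S. T < gromov y (Q s) w}"
  proof
    fix s assume "s \<in> S"
    then show "s \<in> {s \<in> S. gromov x (F s) w \<le> C} \<union> {s \<in> S. T < gromov x (P s) w}
      \<union> {s \<in> S. T < gromov y (Q s) w}"
      using bad[of s] by (cases "gromov x (F s) w \<le> C") auto
  qed
  then have "card S \<le> card ({s \<in> S. gromov x (F s) w \<le> C} \<union> {s \<in> S. T < gromov x (P s) w}
      \<union> {s \<in> S. T < gromov y (Q s) w})"
    using assms(1) by (intro card_mono) auto
  also have "\<dots> \<le> card {s \<in> S. gromov x (F s) w \<le> C} + card {s \<in> S. T < gromov x (P s) w}
      + card {s \<in> S. T < gromov y (Q s) w}"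
    by (meson add_le_mono1 card_Un_le order_trans)
  also have "\<dots> \<le> card {s \<in> S. gromov x (F s) w \<le> C} + 1 + 1"
    using card_gromov_gt_le_1[where P = P and z = x, OF assms(1) sep_P]
      card_gromov_gt_le_1[where P = Q and z = y, OF assms(1) sep_Q]
    by (meson add_le_mono le_refl)
  finally show ?thesis by simp
qed

end

locale hyperbolic_action = hyperbolic_space \<delta> + group G
  for \<delta> and G (structure) +
  fixes act :: "'g \<Rightarrow> 'x::metric_space \<Rightarrow> 'x"
  assumes isometric: "isometric_action G act"
begin

lemma act_one [simp]: "act \<one> x = x"
  using isometric unfolding isometric_action_def by auto

lemma act_mult: "g \<in> carrier G \<Longrightarrow> h \<in> carrier G \<Longrightarrow> act (g \<otimes> h) x = act g (act h x)"
  using isometric unfolding isometric_action_def by auto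

lemma dist_act [simp]: "g \<in> carrier G \<Longrightarrow> dist (act g x) (act g y) = dist x y"
  using isometric unfolding isometric_action_def by auto

lemma act_inv_act [simp]: "g \<in> carrier G \<Longrightarrow> act (inv g) (act g x) = x"
  using act_mult[of "inv g" g x] by simp

lemma act_act_inv [simp]: "g \<in> carrier G \<Longrightarrow> act g (act (inv g) x) = x"
  using act_mult[of g "inv g" x] by simp

lemma gromov_act [simp]: "g \<in> carrier G \<Longrightarrow> gromov (act g x) (act g y) (act g w) = gromov x y w"
  unfolding gromov_def by simp

lemma gromov_act_eq_inv_base: "g \<in> carrier G \<Longrightarrow> gromov (act g x) (act g y) w = gromov x y (act (inv g) w)"
  using gromov_act[of g x y "act (inv g) w"] by simp

lemma dist_act_inv: "h \<in> carrier G \<Longrightarrow> dist p (act (inv h) p) = dist p (act h p)"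
  using dist_act[of h p "act (inv h) p"] by (simp add: dist_commute)

lemma act_pow_add: "g \<in> carrier G \<Longrightarrow> act (g [^] (n + m :: nat)) x = act (g [^] n) (act (g [^] m) x)"
  using act_mult[of "g [^] n" "g [^] m" x] nat_pow_mult[of g n m] by simp

lemma act_pow_Suc: "g \<in> carrier G \<Longrightarrow> act g (act (g [^] (n::nat)) x) = act (g [^] Suc n) x"
  using act_mult[of g "g [^] n" x] nat_pow_Suc2[of g n] by simp

lemma dist_act_mult_inv:
  assumes "u \<in> carrier G" "h \<in> carrier G" "v \<in> carrier G"
  shows "dist (act (u \<otimes> h \<otimes> inv v) p) (act u (act h p)) = dist p (act v p)"
  using assms dist_act_inv[of v p] by (simp add: act_mult dist_commute)

lemma dist_act_inv_mult_inv:
  assumes "u \<in> carrier G" "h \<in> carrier G" "v \<in> carrier G"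
  shows "dist (act (inv (u \<otimes> h \<otimes> inv v)) p) (act v (act (inv h) p)) = dist p (act u p)"
  using assms dist_act_mult_inv[of v "inv h" u p] by (simp add: inv_mult_group m_assoc)

lemma gromov_act_gt_split:
  assumes s: "s \<in> carrier G" and far: "2 * C + 1 \<le> dist p (act s p)"
    and "C < gromov x (act s y) p"
  shows "C - \<delta> < gromov x (act s p) p \<or> C - \<delta> < gromov y (act (inv s) p) p"
proof (rule ccontr)
  assume "\<not> ?thesis"
  then have near_x: "gromov (act s p) x p \<le> C - \<delta>" and near_y: "gromov y (act (inv s) p) p \<le> C - \<delta>"
    using gromov_commute[of x "act s p" p] by auto
  have "gromov (act s p) (act s y) p \<le> C - \<delta> + \<delta>"
    using four_point_le[OF near_x] assms(3) by simp
  moreover have "gromov (act s p) (act s y) p = gromov p y (act (inv s) p)"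
    by (rule gromov_act_eq_inv_base[OF s])
  moreover have "gromov (act (inv s) p) y p + gromov p y (act (inv s) p) = dist p (act (inv s) p)"
    by (rule gromov_add_gromov)
  ultimately show False
    using near_y far dist_act_inv[OF s, of p] gromov_commute[of y "act (inv s) p" p] delta_nonneg
    by linarith
qed

lemma Stab_subset_conj:
  assumes w: "w \<in> carrier G" and near_p: "dist p (act w p) \<le> R" and near_z: "dist z (act w y) \<le> R"
  shows "Stab G act K p z \<subseteq> (\<lambda>\<phi>. w \<otimes> \<phi> \<otimes> inv w) ` Stab G act (K + 2 * R) p y"
proof
  fix f assume "f \<in> Stab G act K p z"
  then have f: "f \<in> carrier G" "dist p (act f p) \<le> K" "dist z (act f z) \<le> K"
    unfolding Stab_def by auto
  define \<phi> where "\<phi> = inv w \<otimes> f \<otimes> w"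
  have \<phi>: "\<phi> \<in> carrier G"
    unfolding \<phi>_def using f w by simp
  have "f = w \<otimes> \<phi> \<otimes> inv w"
    unfolding \<phi>_def using f w by (simp add: m_assoc) (simp add: m_assoc[symmetric])
  have act_\<phi>: "dist q (act \<phi> q) = dist (act w q) (act f (act w q))" for q
    unfolding \<phi>_def using f w dist_act[OF w, of q "act (inv w) (act f (act w q))"] by (simp add: act_mult)
  have "dist (act w p) (act f (act w p)) \<le> dist (act w p) p + dist p (act f p) + dist (act f p) (act f (act w p))"
    by (rule dist_triangle_3)
  then have "dist p (act \<phi> p) \<le> K + 2 * R"
    using act_\<phi>[of p] f near_p by (simp add: dist_commute)
  moreover have "dist (act w y) (act f (act w y)) \<le> dist (act w y) z + dist z (act f z) + dist (act f z) (act f (act w y))"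
    by (rule dist_triangle_3)
  then have "dist y (act \<phi> y) \<le> K + 2 * R"
    using act_\<phi>[of y] f near_z by (simp add: dist_commute)
  ultimately have "\<phi> \<in> Stab G act (K + 2 * R) p y"
    unfolding Stab_def using \<phi> by simp
  then show "f \<in> (\<lambda>\<phi>. w \<otimes> \<phi> \<otimes> inv w) ` Stab G act (K + 2 * R) p y"
    using \<open>f = w \<otimes> \<phi> \<otimes> inv w\<close> by blast
qed

definition displacement :: "'g \<Rightarrow> 'x \<Rightarrow> nat \<Rightarrow> real" where
  "displacement g p n = dist (act (g [^] n) p) p"

lemma displacement_0 [simp]: "displacement g p 0 = 0"
  unfolding displacement_def by simp

lemma displacement_nonneg: "0 \<le> displacement g p n"
  unfolding displacement_def by simp

lemma displacement_add:
  assumes g: "g \<in> carrier G"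
  shows "displacement g p (n + m) \<le> displacement g p n + displacement g p m"
proof -
  have "displacement g p (n + m) = dist (act (g [^] n) (act (g [^] m) p)) p"
    unfolding displacement_def using act_pow_add[OF g] by simp
  also have "\<dots> \<le> dist (act (g [^] n) (act (g [^] m) p)) (act (g [^] n) p) + dist (act (g [^] n) p) p"
    by (rule dist_triangle)
  also have "\<dots> = displacement g p m + displacement g p n"
    unfolding displacement_def using g by simp
  finally show ?thesis by simp
qed

lemma displacement_mult: "g \<in> carrier G \<Longrightarrow> displacement g p (k * n) \<le> real k * displacement g p n"
proof (induction k)
  case 0
  then show ?case by simp
next
  case (Suc k)
  then show ?case
    using displacement_add[OF Suc.prems, where n = n and m = "k * n" and p = p] by (simp add: algebra_simps)
qed

lemma displacement_inv:
  assumes g: "g \<in> carrier G"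
  shows "displacement (inv g) p n = displacement g p n"
proof -
  have "displacement (inv g) p n = dist (act (inv (g [^] n)) p) p"
    unfolding displacement_def using nat_pow_inv[OF g] by simp
  also have "\<dots> = displacement g p n"
    unfolding displacement_def using dist_act_inv[of "g [^] n" p] g by (simp add: dist_commute)
  finally show ?thesis .
qed

lemma loxodromic_carrier: "loxodromic G act p g \<Longrightarrow> g \<in> carrier G"
  unfolding loxodromic_def by auto

lemma loxodromic_inv:
  assumes "loxodromic G act p g"
  shows "loxodromic G act p (inv g)"
proof -
  have "g \<in> carrier G"
    using assms by (rule loxodromic_carrier)
  then have "dist (act (inv g [^] n) p) p = dist (act (g [^] n) p) p" for n :: nat
    using displacement_inv unfolding displacement_def by blast
  then show ?thesis
    using assms \<open>g \<in> carrier G\<close> unfolding loxodromic_def by simp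
qed

text \<open>By subadditivity the limit of the displacement quotients is also their infimum.\<close>

lemma loxodromic_displacement_linear:
  assumes "loxodromic G act p g"
  shows "\<exists>L>0. (\<forall>n. L * real n \<le> displacement g p n) \<and> (\<lambda>n. displacement g p n / real n) \<longlonglongrightarrow> L"
proof -
  obtain L where L: "L > 0" "(\<lambda>n. displacement g p n / real n) \<longlonglongrightarrow> L"
    using assms unfolding loxodromic_def displacement_def by auto
  have g: "g \<in> carrier G"
    using assms by (rule loxodromic_carrier)
  have "L * real n \<le> displacement g p n" for n
  proof (cases "n = 0")
    case True
    then show ?thesis by simp
  next
    case False
    have "strict_mono (\<lambda>k. k * n)"
      using False by (simp add: strict_mono_def)
    from LIMSEQ_subseq_LIMSEQ[OF L(2) this]
    have "(\<lambda>k. displacement g p (k * n) / real (k * n)) \<longlonglongrightarrow> L"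
      by (simp add: o_def)
    moreover have "displacement g p (k * n) / real (k * n) \<le> displacement g p n / real n" if "k \<ge> 1" for k
      using displacement_mult[OF g, where k = k and n = n and p = p] that False
      by (simp add: divide_simps mult.commute mult.left_commute)
    ultimately have "L \<le> displacement g p n / real n"
      using LIMSEQ_le_const2 by blast
    then show ?thesis
      using False by (simp add: field_simps)
  qed
  then show ?thesis
    using L by blast
qed

lemma loxodromic_displacement_gap:
  assumes "loxodromic G act p g"
  shows "\<exists>k>0. displacement g p k + 3 * \<delta> < displacement g p (2 * k)"
proof -
  obtain L where L: "L > 0" "\<And>n. L * real n \<le> displacement g p n"
    "(\<lambda>n. displacement g p n / real n) \<longlonglongrightarrow> L"
    using loxodromic_displacement_linear[OF assms] by blast
  have "eventually (\<lambda>n. displacement g p n / real n < 3 * L / 2) sequentially"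
    using order_tendstoD(2)[OF L(3), of "3 * L / 2"] L(1) by simp
  moreover have "eventually (\<lambda>n. nat \<lceil>6 * \<delta> / L\<rceil> + 1 \<le> n) sequentially"
    by (rule eventually_ge_at_top)
  ultimately have "eventually (\<lambda>n. displacement g p n / real n < 3 * L / 2 \<and> nat \<lceil>6 * \<delta> / L\<rceil> + 1 \<le> n)
      sequentially"
    by (rule eventually_conj)
  then obtain k where k: "displacement g p k / real k < 3 * L / 2" "nat \<lceil>6 * \<delta> / L\<rceil> + 1 \<le> k"
    unfolding eventually_sequentially by blast
  then have "k > 0" and "6 * \<delta> / L < real k"
    by linarith+
  then have "6 * \<delta> < L * real k"
    using L(1) by (simp add: field_simps)
  moreover have "displacement g p k < 3 / 2 * (L * real k)"
    using k(1) \<open>k > 0\<close> by (simp add: field_simps)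
  moreover have "2 * (L * real k) \<le> displacement g p (2 * k)"
    using L(2)[of "2 * k"] by simp
  ultimately show ?thesis
    using \<open>k > 0\<close> by (intro exI[of _ k]) linarith
qed

lemma loxodromic_orbit_chain:
  assumes lox: "loxodromic G act p g"
  obtains k :: nat and c where "0 < k"
    and "\<And>q q'. q \<le> q' \<Longrightarrow> gromov p (act (g [^] (k * q')) p) (act (g [^] (k * q)) p) \<le> c"
proof -
  have g: "g \<in> carrier G"
    using lox by (rule loxodromic_carrier)
  obtain k where k: "k > 0" "displacement g p k + 3 * \<delta> < displacement g p (2 * k)"
    using loxodromic_displacement_gap[OF lox] by blast
  define x where "x i = act (g [^] (k * i)) p" for i
  define c where "c = gromov p (act (g [^] (2 * k)) p) (act (g [^] k) p)"
  have x_1: "x (i + 1) = act (g [^] (k * i)) (act (g [^] k) p)" for i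
    unfolding x_def using act_pow_add[OF g, of "k * i" k p] by (simp add: algebra_simps)
  have x_2: "x (i + 2) = act (g [^] (k * i)) (act (g [^] (2 * k)) p)" for i
  proof -
    have "k * (i + 2) = k * i + 2 * k"
      by (simp add: algebra_simps)
    then show ?thesis
      unfolding x_def by (simp only: act_pow_add[OF g])
  qed
  have step: "displacement g p k \<le> dist (x i) (x (i + 1))" for i
    unfolding x_1 displacement_def using g by (simp add: x_def dist_commute)
  have turn: "gromov (x i) (x (i + 2)) (x (i + 1)) \<le> c" for i
    unfolding x_1 x_2 c_def using g by (simp add: x_def)
  have "dist (act (g [^] (2 * k)) p) (act (g [^] k) p) = displacement g p k"
    using act_pow_add[OF g, of k k p] g unfolding displacement_def by (simp add: mult_2)
  then have gap: "2 * c + 3 * \<delta> < displacement g p k"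
    using k(2) unfolding c_def gromov_def displacement_def by (simp add: dist_commute field_simps)
  have "0 \<le> c"
    unfolding c_def by (rule gromov_nonneg)
  have bound: "gromov (x 0) (x q') (x q) \<le> c + 2 * \<delta>" if "q \<le> q'" for q q'
  proof (cases "q = 0 \<or> q = q'")
    case True
    then show ?thesis
      using \<open>0 \<le> c\<close> delta_nonneg by (elim disjE) simp_all
  next
    case False
    then show ?thesis
      using chain_gromov_le[OF step turn gap, where j = q and m = q'] that by simp
  qed
  then have "gromov p (act (g [^] (k * q')) p) (act (g [^] (k * q)) p) \<le> c + 2 * \<delta>" if "q \<le> q'" for q q'
    using that unfolding x_def by simp
  with k(1) show ?thesis
    by (rule that)
qed

lemma loxodromic_orbit_quasi_geodesic:
  assumes lox: "loxodromic G act p g"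
  shows "\<exists>c\<ge>0. \<forall>n m. n \<le> m \<longrightarrow> gromov p (act (g [^] m) p) (act (g [^] (n::nat)) p) \<le> c"
proof -
  have g: "g \<in> carrier G"
    using lox by (rule loxodromic_carrier)
  obtain k :: nat and c where k: "k > 0"
    and c: "\<And>q q'. q \<le> q' \<Longrightarrow> gromov p (act (g [^] (k * q')) p) (act (g [^] (k * q)) p) \<le> c"
    by (erule loxodromic_orbit_chain[OF lox])
  define R where "R = (\<Sum>r<k. displacement g p r)"
  have near: "dist (act (g [^] n) p) (act (g [^] (k * (n div k))) p) \<le> R" for n
  proof -
    have "act (g [^] n) p = act (g [^] (k * (n div k))) (act (g [^] (n mod k)) p)"
      using act_pow_add[OF g, of "k * (n div k)" "n mod k" p] by simp
    then have "dist (act (g [^] n) p) (act (g [^] (k * (n div k))) p) = displacement g p (n mod k)"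
      unfolding displacement_def using g by simp
    also have "\<dots> \<le> R"
      unfolding R_def using k by (intro member_le_sum) (auto simp: displacement_nonneg)
    finally show ?thesis .
  qed
  have bound: "gromov p (act (g [^] m) p) (act (g [^] n) p) \<le> c + 2 * R" if "n \<le> m" for n m :: nat
    using gromov_le_perturb[of p "act (g [^] m) p" "act (g [^] n) p"
        p "act (g [^] (k * (m div k))) p" "act (g [^] (k * (n div k))) p"]
      c[OF div_le_mono[OF that, of k]] near[of m] near[of n]
    by simp
  moreover have "0 \<le> c + 2 * R"
    using bound[of 0 0] by simp
  ultimately show ?thesis by blast
qed

lemma loxodromic_orbit_gromov_ge:
  assumes "loxodromic G act p g"
  shows "\<exists>c\<ge>0. \<forall>n m. displacement g p (min n m) - c \<le> gromov (act (g [^] n) p) (act (g [^] (m::nat)) p) p"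
proof -
  obtain c where c: "c \<ge> 0" "\<And>n m. n \<le> m \<Longrightarrow> gromov p (act (g [^] m) p) (act (g [^] (n::nat)) p) \<le> c"
    using loxodromic_orbit_quasi_geodesic[OF assms] by blast
  have le: "displacement g p n - c \<le> gromov (act (g [^] n) p) (act (g [^] (m::nat)) p) p" if "n \<le> m" for n m
    using gromov_add_gromov[of "act (g [^] n) p" "act (g [^] m) p" p] c(2)[OF that]
    unfolding displacement_def by (simp add: dist_commute)
  have "displacement g p (min n m) - c \<le> gromov (act (g [^] n) p) (act (g [^] (m::nat)) p) p" for n m
    using le[of n m] le[of m n] gromov_commute[of "act (g [^] n) p"] by (cases "n \<le> m") (auto simp: min_def)
  then show ?thesis
    using c(1) by blast
qed

lemma Stab_subset_Stab_between:
  assumes "gromov p z y \<le> c" and "0 \<le> c" "0 \<le> K"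
  shows "Stab G act K p z \<subseteq> Stab G act (3 * K + 2 * c + 2 * \<delta>) p y"
proof
  fix f assume "f \<in> Stab G act K p z"
  then have f: "f \<in> carrier G" "dist p (act f p) \<le> K" "dist z (act f z) \<le> K"
    unfolding Stab_def by auto
  have "dist p (act f y) \<le> dist p y + K"
    using dist_triangle[of p "act f y" "act f p"] f by simp
  moreover have "dist p y \<le> dist p (act f y) + K"
    using dist_triangle[of "act f p" "act f y" p] f by (simp add: dist_commute)
  moreover have "dist z (act f y) \<le> dist z y + K"
    using dist_triangle[of z "act f y" "act f z"] f by simp
  ultimately have "dist y (act f y) \<le> 3 * K + 2 * c + 2 * \<delta>"
    using assms(1) by (intro dist_le_if_similar_position)
  then show "f \<in> Stab G act (3 * K + 2 * c + 2 * \<delta>) p y"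
    using f assms(2,3) delta_nonneg unfolding Stab_def by auto
qed

lemma WPD_far_finite_Stab:
  assumes "WPD G act p g" "0 \<le> K"
  shows "\<exists>n. D \<le> displacement g p n \<and> finite (Stab G act K p (act (g [^] n) p))"
proof -
  have lox: "loxodromic G act p g"
    using assms unfolding WPD_def by auto
  obtain c where c: "c \<ge> 0" "\<And>n m. n \<le> m \<Longrightarrow> gromov p (act (g [^] m) p) (act (g [^] (n::nat)) p) \<le> c"
    using loxodromic_orbit_quasi_geodesic[OF lox] by blast
  have "0 \<le> 3 * K + 2 * c + 2 * \<delta>"
    using c(1) assms(2) delta_nonneg by auto
  then obtain P :: nat where P: "finite (Stab G act (3 * K + 2 * c + 2 * \<delta>) p (act (g [^] P) p))"
    using assms(1) unfolding WPD_def by blast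
  obtain L where L: "L > 0" "\<And>n. L * real n \<le> displacement g p n"
    using loxodromic_displacement_linear[OF lox] by blast
  define n where "n = max P (nat \<lceil>D / L\<rceil>)"
  have "D / L \<le> real n"
    unfolding n_def by linarith
  then have "D \<le> displacement g p n"
    using L(1) L(2)[of n] by (simp add: field_simps)
  moreover have "Stab G act K p (act (g [^] n) p) \<subseteq> Stab G act (3 * K + 2 * c + 2 * \<delta>) p (act (g [^] P) p)"
    using c assms(2) by (intro Stab_subset_Stab_between) (simp_all add: n_def)
  ultimately show ?thesis
    using P finite_subset by blast
qed

lemma loxodromic_orbit_conv_inf:
  assumes "loxodromic G act p g"
  shows "conv_inf p (\<lambda>n. act (g [^] n) p)"
  unfolding conv_inf_def
proof
  fix M :: real
  obtain c where c: "\<And>n m. displacement g p (min n m) - c \<le> gromov (act (g [^] n) p) (act (g [^] (m::nat)) p) p"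
    using loxodromic_orbit_gromov_ge[OF assms] by blast
  obtain L where L: "L > 0" "\<And>n. L * real n \<le> displacement g p n"
    using loxodromic_displacement_linear[OF assms] by blast
  define N where "N = nat \<lceil>(M + c) / L\<rceil>"
  have "M \<le> gromov (act (g [^] n) p) (act (g [^] m) p) p" if "N \<le> n" "N \<le> m" for n m :: nat
  proof -
    have "(M + c) / L \<le> real (min n m)"
      using that unfolding N_def by linarith
    then have "M + c \<le> L * real (min n m)"
      using L(1) by (simp add: field_simps)
    then show ?thesis
      using c[of n m] L(2)[of "min n m"] by linarith
  qed
  then show "\<exists>N::nat. \<forall>n\<ge>N. \<forall>m\<ge>N. M \<le> gromov (act (g [^] n) p) (act (g [^] m) p) p"
    by blast
qed

text \<open>Bounded Gromov products: the forward orbits of \<open>e\<close> and \<open>f\<close> tend to distinct boundary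
  points.\<close>

definition orbits_diverge :: "'x \<Rightarrow> 'g \<Rightarrow> 'g \<Rightarrow> bool" where
  "orbits_diverge p e f \<longleftrightarrow> (\<exists>B. \<forall>(n::nat) (s::nat). gromov (act (e [^] n) p) (act (f [^] s) p) p \<le> B)"

lemma loxodromic_orbit_tail_gromov_ge:
  assumes "loxodromic G act p e"
  obtains c where "0 \<le> c"
    "\<And>T n0 n q. T < gromov (act (e [^] (n0::nat)) p) q p \<Longrightarrow> n0 \<le> n \<Longrightarrow> T - c \<le> gromov (act (e [^] n) p) q p"
proof -
  obtain c where c: "0 \<le> c"
    "\<And>n m. displacement e p (min n m) - c \<le> gromov (act (e [^] n) p) (act (e [^] (m::nat)) p) p"
    using loxodromic_orbit_gromov_ge[OF assms] by blast
  have "T - (c + \<delta>) \<le> gromov (act (e [^] n) p) q p"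
    if T: "T < gromov (act (e [^] n0) p) q p" and "n0 \<le> n" for T and n0 n :: nat and q
  proof -
    have "T \<le> displacement e p n0"
      using T gromov_le_dist[of "act (e [^] n0) p" q p] unfolding displacement_def by linarith
    then have "T - c \<le> gromov (act (e [^] n) p) (act (e [^] n0) p) p"
      using c(2)[of n n0] \<open>n0 \<le> n\<close> by (simp add: min_absorb2)
    moreover have "T - c \<le> gromov q (act (e [^] n0) p) p"
      using T c(1) gromov_commute[of q "act (e [^] n0) p" p] by linarith
    ultimately show ?thesis
      using four_point_ge by fastforce
  qed
  then show ?thesis
    using that[of "c + \<delta>"] c(1) delta_nonneg by simp
qed

text \<open>Where the orbits of \<open>e\<close> and \<open>f\<close> fellow-travel, \<open>f\<close> shifts the tail of the orbit of \<open>e\<close>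
  only slightly along itself.\<close>

lemma loxodromic_fellow_travel_gromov_ge:
  assumes le: "loxodromic G act p e" and lf: "loxodromic G act p f"
  obtains c where "\<And>T n0 s0 n m. T < gromov (act (e [^] n0) p) (act (f [^] (s0::nat)) p) p \<Longrightarrow>
    n0 \<le> n \<Longrightarrow> n0 \<le> m \<Longrightarrow> T - c \<le> gromov (act f (act (e [^] n) p)) (act (e [^] (m::nat)) p) p"
proof -
  have f: "f \<in> carrier G"
    using lf by (rule loxodromic_carrier)
  obtain ce where ce: "0 \<le> ce"
    "\<And>T n0 n q. T < gromov (act (e [^] (n0::nat)) p) q p \<Longrightarrow> n0 \<le> n \<Longrightarrow> T - ce \<le> gromov (act (e [^] n) p) q p"
    by (erule loxodromic_orbit_tail_gromov_ge[OF le])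
  obtain cf where cf: "0 \<le> cf"
    "\<And>T n0 n q. T < gromov (act (f [^] (n0::nat)) p) q p \<Longrightarrow> n0 \<le> n \<Longrightarrow> T - cf \<le> gromov (act (f [^] n) p) q p"
    by (erule loxodromic_orbit_tail_gromov_ge[OF lf])
  define a where "a = dist p (act f p)"
  have "T - (ce + cf + a + 2 * \<delta>) \<le> gromov (act f (act (e [^] n) p)) (act (e [^] m) p) p"
    if T: "T < gromov (act (e [^] n0) p) (act (f [^] s0) p) p" and "n0 \<le> n" "n0 \<le> m" for T and n0 s0 n m :: nat
  proof -
    define F0 where "F0 = act (f [^] s0) p"
    define F1 where "F1 = act (f [^] Suc s0) p"
    have "T < gromov F0 F0 p"
      using T gromov_le_dist[of F0 "act (e [^] n0) p" p] gromov_commute[of F0 "act (e [^] n0) p" p]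
      unfolding F0_def by simp
    then have "T - ce - cf \<le> gromov F1 F0 p"
      unfolding F1_def using cf(2)[of T s0 F0 "Suc s0"] ce(1) unfolding F0_def by simp
    moreover have "T - ce - cf \<le> gromov (act (e [^] m) p) F0 p"
      using ce(2)[OF T \<open>n0 \<le> m\<close>] cf(1) unfolding F0_def by linarith
    ultimately have "T - ce - cf - \<delta> \<le> gromov (act (e [^] m) p) F1 p"
      by (intro four_point_ge)
    moreover have "gromov (act f (act (e [^] n) p)) F1 p = gromov (act (e [^] n) p) F0 (act (inv f) p)"
      unfolding F1_def F0_def act_pow_Suc[OF f, symmetric] by (rule gromov_act_eq_inv_base[OF f])
    moreover have "gromov (act (e [^] n) p) F0 p \<le> gromov (act (e [^] n) p) F0 (act (inv f) p) + a"
      using gromov_le_move_base[of _ F0 p "act (inv f) p"] dist_act_inv[OF f, of p] unfolding a_def by simp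
    ultimately have "T - ce - cf - a - \<delta> \<le> gromov (act f (act (e [^] n) p)) F1 p"
      and "T - ce - cf - a - \<delta> \<le> gromov (act (e [^] m) p) F1 p"
      using ce(2)[OF T \<open>n0 \<le> n\<close>] cf(1) delta_nonneg zero_le_dist[of p "act f p"]
      unfolding a_def F0_def by linarith+
    then have "T - ce - cf - a - \<delta> - \<delta> \<le> gromov (act f (act (e [^] n) p)) (act (e [^] m) p) p"
      by (rule four_point_ge)
    then show ?thesis
      by simp
  qed
  then show ?thesis
    by (rule that)
qed

lemma bd_fixed_if_not_orbits_diverge:
  assumes le: "loxodromic G act p e" and lf: "loxodromic G act p f"
    and "\<not> orbits_diverge p e f"
  shows "bd_fixed act p f (\<lambda>n. act (e [^] n) p)"
proof -
  obtain c where c: "\<And>T n0 s0 n m. T < gromov (act (e [^] n0) p) (act (f [^] (s0::nat)) p) p \<Longrightarrow>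
    n0 \<le> n \<Longrightarrow> n0 \<le> m \<Longrightarrow> T - c \<le> gromov (act f (act (e [^] n) p)) (act (e [^] (m::nat)) p) p"
    by (erule loxodromic_fellow_travel_gromov_ge[OF le lf])
  have "\<exists>N::nat. \<forall>n\<ge>N. \<forall>m\<ge>N. M \<le> gromov (act f (act (e [^] n) p)) (act (e [^] m) p) p" for M
  proof -
    obtain n0 s0 :: nat where "M + c < gromov (act (e [^] n0) p) (act (f [^] s0) p) p"
      using assms(3) unfolding orbits_diverge_def by (meson not_le)
    then show ?thesis
      using c by fastforce
  qed
  then show ?thesis
    using loxodromic_orbit_conv_inf[OF le] unfolding bd_fixed_def bd_equiv_def by simp
qed

lemma bd_fixed_of_inv:
  assumes f: "f \<in> carrier G" and fixed: "bd_fixed act p (inv f) \<xi>"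
  shows "bd_fixed act p f \<xi>"
proof -
  define a where "a = dist p (act (inv f) p)"
  have "\<exists>N. \<forall>n\<ge>N. \<forall>m\<ge>N. M \<le> gromov (act f (\<xi> n)) (\<xi> m) p" for M
  proof -
    obtain N where N: "\<And>n m. N \<le> n \<Longrightarrow> N \<le> m \<Longrightarrow> M + a \<le> gromov (act (inv f) (\<xi> n)) (\<xi> m) p"
      using fixed unfolding bd_fixed_def bd_equiv_def by meson
    have "M \<le> gromov (act f (\<xi> n)) (\<xi> m) p" if "N \<le> n" "N \<le> m" for n m
    proof -
      have "gromov (act f (\<xi> n)) (\<xi> m) p = gromov (act f (\<xi> n)) (act f (act (inv f) (\<xi> m))) p"
        using f by simp
      also have "\<dots> = gromov (\<xi> n) (act (inv f) (\<xi> m)) (act (inv f) p)"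
        by (rule gromov_act_eq_inv_base[OF f])
      finally have "gromov (act f (\<xi> n)) (\<xi> m) p = gromov (\<xi> n) (act (inv f) (\<xi> m)) (act (inv f) p)" .
      moreover have "gromov (\<xi> n) (act (inv f) (\<xi> m)) p \<le> gromov (\<xi> n) (act (inv f) (\<xi> m)) (act (inv f) p) + a"
        unfolding a_def by (rule gromov_le_move_base)
      moreover have "M + a \<le> gromov (\<xi> n) (act (inv f) (\<xi> m)) p"
        using N[OF that(2,1)] gromov_commute[of "\<xi> n" "act (inv f) (\<xi> m)" p] by simp
      ultimately show ?thesis
        by linarith
    qed
    then show ?thesis
      by blast
  qed
  then show ?thesis
    using fixed unfolding bd_fixed_def bd_equiv_def by simp
qed

lemma non_elementary_diverging_loxodromic:
  assumes le: "loxodromic G act p e" and ne: "non_elementary G act p"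
  obtains f where "loxodromic G act p f" "orbits_diverge p e f" "orbits_diverge p e (inv f)"
proof -
  obtain a b where ab: "loxodromic G act p a" "loxodromic G act p b"
      "\<not> (\<exists>\<xi>. bd_fixed act p a \<xi> \<and> bd_fixed act p b \<xi>)"
    using ne unfolding non_elementary_def by blast
  have fixes_e_orbit: "bd_fixed act p f (\<lambda>n. act (e [^] n) p)"
    if lf: "loxodromic G act p f" and "\<not> (orbits_diverge p e f \<and> orbits_diverge p e (inv f))" for f
  proof (cases "orbits_diverge p e f")
    case True
    then have "bd_fixed act p (inv f) (\<lambda>n. act (e [^] n) p)"
      using that bd_fixed_if_not_orbits_diverge[OF le loxodromic_inv[OF lf]] by blast
    then show ?thesis
      using bd_fixed_of_inv loxodromic_carrier[OF lf] by blast
  next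
    case False
    then show ?thesis
      using bd_fixed_if_not_orbits_diverge[OF le lf] by blast
  qed
  show ?thesis
    using fixes_e_orbit[OF ab(1)] fixes_e_orbit[OF ab(2)] ab that by blast
qed

text \<open>The point \<open>f\<^sup>r\<^sup>' e\<^sup>m p\<close> follows the axis of \<open>f\<close> up to \<open>f\<^sup>r\<^sup>' p\<close>, as the orbit of \<open>e\<close>
  diverges from the negative half-axis of \<open>f\<close>, whereas \<open>f\<^sup>r e\<^sup>n p\<close> leaves the axis near \<open>f\<^sup>r p\<close>,
  as the orbit of \<open>e\<close> diverges from the positive half-axis.\<close>

lemma gromov_power_translates_le:
  assumes f: "f \<in> carrier G"
    and Bp: "\<And>n s. gromov (act (e [^] (n::nat)) p) (act (f [^] (s::nat)) p) p \<le> Bp"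
    and Bm: "\<And>n s. gromov (act (e [^] (n::nat)) p) (act (inv f [^] (s::nat)) p) p \<le> Bm"
    and r: "r \<le> r'" "displacement f p r + Bp + Bm + \<delta> < displacement f p r'"
  shows "gromov (act (f [^] r) (act (e [^] (n::nat)) p)) (act (f [^] r') (act (e [^] (m::nat)) p)) p
      \<le> Bp + displacement f p r + \<delta>"
proof -
  define a where "a = f [^] r"
  define b where "b = f [^] r'"
  have a: "a \<in> carrier G" and b: "b \<in> carrier G"
    unfolding a_def b_def using f by auto
  have "b = a \<otimes> f [^] (r' - r)"
    unfolding a_def b_def using nat_pow_mult[OF f, of r "r' - r"] r(1) by simp
  then have b_p: "act b p = act a (act (f [^] (r' - r)) p)"
    using a f by (simp add: act_mult)
  have "dist p (act (inv a) p) = displacement f p r"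
    unfolding displacement_def a_def using dist_act_inv[of "f [^] r" p] f by (simp add: dist_commute)
  then have "gromov (act a (act (e [^] n) p)) (act b p) p \<le> Bp + displacement f p r"
    unfolding b_p gromov_act_eq_inv_base[OF a]
    using gromov_le_move_base[of "act (e [^] n) p" "act (f [^] (r' - r)) p" "act (inv a) p" p] Bp[of n "r' - r"]
    by (simp add: dist_commute)
  moreover have "displacement f p r' - Bm \<le> gromov (act b p) (act b (act (e [^] m) p)) p"
  proof -
    define W where "W = act (inv b) p"
    have "gromov (act b p) (act b (act (e [^] m) p)) p = gromov p (act (e [^] m) p) W"
      unfolding W_def by (rule gromov_act_eq_inv_base[OF b])
    moreover have "gromov W (act (e [^] m) p) p + gromov p (act (e [^] m) p) W = dist p W"
      by (rule gromov_add_gromov)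
    moreover have "dist p W = displacement f p r'"
      unfolding W_def displacement_def b_def using dist_act_inv[of "f [^] r'" p] f by (simp add: dist_commute)
    moreover have "gromov (act (e [^] m) p) W p \<le> Bm"
      unfolding W_def b_def using Bm[of m r'] f by (simp add: nat_pow_inv)
    ultimately show ?thesis
      using gromov_commute[of W "act (e [^] m) p" p] by linarith
  qed
  ultimately show ?thesis
    using four_point_le[of "act a (act (e [^] n) p)" "act b p" p "Bp + displacement f p r"
        "act b (act (e [^] m) p)"] r(2)
    unfolding a_def b_def by linarith
qed

lemma separated_orbit_translates:
  assumes le: "loxodromic G act p e" and ne: "non_elementary G act p"
  obtains B and u :: "nat \<Rightarrow> 'g" where "0 \<le> B" "\<And>i. u i \<in> carrier G"
    "\<And>i j n m. i < N \<Longrightarrow> j < N \<Longrightarrow> i \<noteq> j \<Longrightarrow>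
       gromov (act (u i) (act (e [^] (n::nat)) p)) (act (u j) (act (e [^] (m::nat)) p)) p \<le> B"
proof -
  obtain f where f: "loxodromic G act p f" "orbits_diverge p e f" "orbits_diverge p e (inv f)"
    by (erule non_elementary_diverging_loxodromic[OF le ne])
  from f(2) obtain Bp where Bp: "\<And>n s. gromov (act (e [^] (n::nat)) p) (act (f [^] (s::nat)) p) p \<le> Bp"
    unfolding orbits_diverge_def by blast
  from f(3) obtain Bm where Bm: "\<And>n s. gromov (act (e [^] (n::nat)) p) (act (inv f [^] (s::nat)) p) p \<le> Bm"
    unfolding orbits_diverge_def by blast
  obtain L where L: "L > 0" "\<And>n. L * real n \<le> displacement f p n"
    using loxodromic_displacement_linear[OF f(1)] by blast
  have "0 < Bp + Bm + \<delta> + 1"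
    using Bp[of 0 0] Bm[of 0 0] delta_nonneg by simp
  then obtain t :: "nat \<Rightarrow> nat" where t: "\<And>i j. i < j \<Longrightarrow>
      t i \<le> t j \<and> displacement f p (t i) + (Bp + Bm + \<delta> + 1) \<le> displacement f p (t j)"
    using linear_growth_spaced_subseq[OF L] by blast
  define B where "B = Bp + \<delta> + (\<Sum>i<N. displacement f p (t i))"
  have sep: "gromov (act (f [^] t i) (act (e [^] n) p)) (act (f [^] t j) (act (e [^] m) p)) p \<le> B"
    if "i < j" "i < N" for i j n m :: nat
  proof -
    have "displacement f p (t i) \<le> (\<Sum>i<N. displacement f p (t i))"
      using \<open>i < N\<close> by (intro member_le_sum) (auto simp: displacement_nonneg)
    then show ?thesis
      using gromov_power_translates_le[OF loxodromic_carrier[OF f(1)] Bp Bm, of "t i" "t j" n m] t[OF \<open>i < j\<close>]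
      unfolding B_def by linarith
  qed
  show ?thesis
  proof (rule that[of B "\<lambda>i. f [^] t i"])
    show "0 \<le> B"
      unfolding B_def using Bp[of 0 0] delta_nonneg by (simp add: sum_nonneg displacement_nonneg)
    show "f [^] t i \<in> carrier G" for i
      using loxodromic_carrier[OF f(1)] by simp
    show "gromov (act (f [^] t i) (act (e [^] n) p)) (act (f [^] t j) (act (e [^] m) p)) p \<le> B"
      if "i < N" "j < N" "i \<noteq> j" for i j n m :: nat
      using sep[of i j n m] sep[of j i m n] that
        gromov_commute[of "act (f [^] t i) (act (e [^] n) p)" "act (f [^] t j) (act (e [^] m) p)" p]
      by (cases "i < j") auto
  qed
qed

lemma schottky_if_separated:
  assumes S: "finite S" "S \<subseteq> carrier G" and card: "2 \<le> \<eta> * real (card S)"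
    and far: "\<And>s. s \<in> S \<Longrightarrow> max D (2 * C + 1) \<le> dist p (act s p)"
    and sep: "\<And>a b. a \<in> S \<Longrightarrow> b \<in> S \<Longrightarrow> a \<noteq> b \<Longrightarrow> gromov (act a p) (act b p) p \<le> C - 2 * \<delta>"
    and sep_inv: "\<And>a b. a \<in> S \<Longrightarrow> b \<in> S \<Longrightarrow> a \<noteq> b \<Longrightarrow>
      gromov (act (inv a) p) (act (inv b) p) p \<le> C - 2 * \<delta>"
  shows "schottky G act p \<eta> C D S"
proof -
  have carrier: "s \<in> carrier G" if "s \<in> S" for s
    using that S(2) by blast
  have far': "2 * C + 1 \<le> dist p (act s p)" "2 * C + 1 \<le> dist p (act (inv s) p)" if "s \<in> S" for s
    using far[OF that] dist_act_inv[OF carrier[OF that], of p] by simp_all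
  have good: "real (card S) - 2 \<le> real (card {s \<in> S. gromov x (act s y) p \<le> C})" for x y
  proof (rule card_gromov_le_ge[OF S(1), where T = "C - \<delta>" and P = "\<lambda>s. act s p" and Q = "\<lambda>s. act (inv s) p"])
    show "C - \<delta> < gromov x (act s p) p \<or> C - \<delta> < gromov y (act (inv s) p) p"
      if "s \<in> S" "C < gromov x (act s y) p" for s
      using gromov_act_gt_split[OF carrier far'(1)] that by blast
  qed (use sep sep_inv in simp_all)
  have good_inv: "real (card S) - 2 \<le> real (card {s \<in> S. gromov x (act (inv s) y) p \<le> C})" for x y
  proof (rule card_gromov_le_ge[OF S(1), where T = "C - \<delta>" and P = "\<lambda>s. act (inv s) p" and Q = "\<lambda>s. act s p"])
    show "C - \<delta> < gromov x (act (inv s) p) p \<or> C - \<delta> < gromov y (act s p) p"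
      if "s \<in> S" "C < gromov x (act (inv s) y) p" for s
      using gromov_act_gt_split[OF inv_closed[OF carrier] far'(2)] carrier that by simp
  qed (use sep sep_inv in simp_all)
  have "(1 - \<eta>) * real (card S) \<le> real (card S) - 2"
    using card by (simp add: algebra_simps)
  moreover have "S \<noteq> {}"
    using card by auto
  ultimately show ?thesis
    unfolding schottky_def using S good good_inv far by (meson max.boundedE order_trans)
qed

lemma schottky_image_if_separated:
  assumes s: "\<And>i. i < N \<Longrightarrow> s i \<in> carrier G" and N: "2 \<le> \<eta> * real N" and "0 \<le> C"
    and far: "\<And>i. i < N \<Longrightarrow> max D (2 * C + 1) \<le> dist p (act (s i) p)"
    and sep: "\<And>i j. i < N \<Longrightarrow> j < N \<Longrightarrow> i \<noteq> j \<Longrightarrow> gromov (act (s i) p) (act (s j) p) p \<le> C - 2 * \<delta>"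
    and sep_inv: "\<And>i j. i < N \<Longrightarrow> j < N \<Longrightarrow> i \<noteq> j \<Longrightarrow>
      gromov (act (inv (s i)) p) (act (inv (s j)) p) p \<le> C - 2 * \<delta>"
  shows "schottky G act p \<eta> C D (s ` {..<N})"
proof (rule schottky_if_separated)
  have "inj_on (\<lambda>i. act (s i) p) {..<N}"
  proof (rule inj_on_if_gromov_lt_dist)
    show "gromov (act (s i) p) (act (s j) p) p \<le> C - 2 * \<delta>" if "i \<in> {..<N}" "j \<in> {..<N}" "i \<noteq> j" for i j
      using sep that by simp
    show "C - 2 * \<delta> < dist (act (s i) p) p" if "i \<in> {..<N}" for i
      using far[of i] that \<open>0 \<le> C\<close> delta_nonneg by (simp add: dist_commute)
  qed
  then have "card (s ` {..<N}) = N"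
    using inj_on_imageI2[of "\<lambda>h. act h p" s] by (simp add: o_def card_image)
  then show "2 \<le> \<eta> * real (card (s ` {..<N}))"
    using N by simp
  show "gromov (act a p) (act b p) p \<le> C - 2 * \<delta>"
    and "gromov (act (inv a) p) (act (inv b) p) p \<le> C - 2 * \<delta>"
    if "a \<in> s ` {..<N}" "b \<in> s ` {..<N}" "a \<noteq> b" for a b
    using that sep sep_inv by auto
qed (use s far in auto)

lemma schottky_of_separated_translates:
  assumes wpd: "WPD G act p g" and N: "2 \<le> \<eta> * real N"
    and u: "\<And>i. u i \<in> carrier G"
      "\<And>i j n m. i < N \<Longrightarrow> j < N \<Longrightarrow> i \<noteq> j \<Longrightarrow>
         gromov (act (u i) (act (g [^] (n::nat)) p)) (act (u j) (act (g [^] (m::nat)) p)) p \<le> B\<^sub>u"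
    and v: "\<And>i. v i \<in> carrier G"
      "\<And>i j n m. i < N \<Longrightarrow> j < N \<Longrightarrow> i \<noteq> j \<Longrightarrow>
         gromov (act (v i) (act (inv g [^] (n::nat)) p)) (act (v j) (act (inv g [^] (m::nat)) p)) p \<le> B\<^sub>v"
    and R: "\<And>i. i < N \<Longrightarrow> dist p (act (u i) p) \<le> R" "\<And>i. i < N \<Longrightarrow> dist p (act (v i) p) \<le> R"
    and C: "C = B\<^sub>u + B\<^sub>v + 2 * R + 2 * \<delta> + 1" "0 \<le> B\<^sub>u" "0 \<le> B\<^sub>v" "0 \<le> R"
    and K: "0 < K"
  shows "\<exists>S. schottky G act p \<eta> C D S \<and> (\<forall>s\<in>S. finite (Stab G act K p (act s p)))"
proof -
  have g: "g \<in> carrier G"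
    using wpd unfolding WPD_def loxodromic_def by simp
  obtain n where n: "max D (2 * C + 1) + 2 * R \<le> displacement g p n"
      "finite (Stab G act (K + 2 * R) p (act (g [^] n) p))"
    using WPD_far_finite_Stab[OF wpd, of "K + 2 * R"] K C(4) by force
  define s where "s i = u i \<otimes> g [^] n \<otimes> inv (v i)" for i
  have s: "s i \<in> carrier G" for i
    unfolding s_def using u(1) v(1) g by simp
  have near: "dist (act (s i) p) (act (u i) (act (g [^] n) p)) \<le> R" if "i < N" for i
    unfolding s_def using dist_act_mult_inv[OF u(1) nat_pow_closed[OF g] v(1)] R(2)[OF that] by simp
  have near_inv: "dist (act (inv (s i)) p) (act (v i) (act (inv g [^] n) p)) \<le> R" if "i < N" for i
    unfolding s_def using dist_act_inv_mult_inv[OF u(1) nat_pow_closed[OF g] v(1)] R(1)[OF that] g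
    by (simp add: nat_pow_inv)
  have far: "max D (2 * C + 1) \<le> dist p (act (s i) p)" if "i < N" for i
    using dist_triangle_3[of "act (u i) p" "act (u i) (act (g [^] n) p)" p "act (s i) p"]
      n(1) near[OF that] R(1)[OF that] u(1) max.cobounded1[of D "2 * C + 1"] max.cobounded2[of "2 * C + 1" D]
    unfolding displacement_def by (auto simp: dist_commute)
  have sep: "gromov (act (s i) p) (act (s j) p) p \<le> C - 2 * \<delta>" if "i < N" "j < N" "i \<noteq> j" for i j
    using gromov_le_perturb[of "act (s i) p" "act (s j) p" p
        "act (u i) (act (g [^] n) p)" "act (u j) (act (g [^] n) p)" p]
      u(2)[OF that, of n n] near[OF that(1)] near[OF that(2)] C(1,3) by simp
  have sep_inv: "gromov (act (inv (s i)) p) (act (inv (s j)) p) p \<le> C - 2 * \<delta>" if "i < N" "j < N" "i \<noteq> j" for i j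
    using gromov_le_perturb[of "act (inv (s i)) p" "act (inv (s j)) p" p
        "act (v i) (act (inv g [^] n) p)" "act (v j) (act (inv g [^] n) p)" p]
      v(2)[OF that, of n n] near_inv[OF that(1)] near_inv[OF that(2)] C(1,2) by simp
  have "schottky G act p \<eta> C D (s ` {..<N})"
    using C delta_nonneg by (intro schottky_image_if_separated[OF s N _ far sep sep_inv]) simp
  moreover have "finite (Stab G act K p (act (s i) p))" if "i < N" for i
    using Stab_subset_conj[OF u(1) _ near[OF that], where K = K] R(1)[OF that] n(2)
    by (meson finite_imageI finite_subset)
  ultimately show ?thesis
    by blast
qed

lemma exists_schottky_finite_Stab:
  assumes ne: "non_elementary G act p" and wpd: "WPD G act p g" and "0 < \<eta>"
  shows "\<exists>C>0. \<forall>D>0. \<forall>K>0. \<exists>S. schottky G act p \<eta> C D S \<and> (\<forall>s\<in>S. finite (Stab G act K p (act s p)))"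
proof -
  have lox: "loxodromic G act p g"
    using wpd unfolding WPD_def by simp
  define N where "N = nat \<lceil>2 / \<eta>\<rceil>"
  have "2 / \<eta> \<le> real N"
    unfolding N_def by linarith
  then have N: "2 \<le> \<eta> * real N"
    using \<open>0 < \<eta>\<close> by (simp add: field_simps)
  obtain B\<^sub>u and u :: "nat \<Rightarrow> 'g" where u: "0 \<le> B\<^sub>u" "\<And>i. u i \<in> carrier G"
    "\<And>i j n m. i < N \<Longrightarrow> j < N \<Longrightarrow> i \<noteq> j \<Longrightarrow>
       gromov (act (u i) (act (g [^] (n::nat)) p)) (act (u j) (act (g [^] (m::nat)) p)) p \<le> B\<^sub>u"
    by (erule separated_orbit_translates[OF lox ne])
  obtain B\<^sub>v and v :: "nat \<Rightarrow> 'g" where v: "0 \<le> B\<^sub>v" "\<And>i. v i \<in> carrier G"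
    "\<And>i j n m. i < N \<Longrightarrow> j < N \<Longrightarrow> i \<noteq> j \<Longrightarrow>
       gromov (act (v i) (act (inv g [^] (n::nat)) p)) (act (v j) (act (inv g [^] (m::nat)) p)) p \<le> B\<^sub>v"
    by (erule separated_orbit_translates[OF loxodromic_inv[OF lox] ne])
  define R where "R = (\<Sum>i<N. dist p (act (u i) p) + dist p (act (v i) p))"
  have R: "dist p (act (u i) p) \<le> R" "dist p (act (v i) p) \<le> R" if "i < N" for i
  proof -
    have "dist p (act (u i) p) + dist p (act (v i) p) \<le> R"
      unfolding R_def using that by (intro member_le_sum) auto
    then show "dist p (act (u i) p) \<le> R" "dist p (act (v i) p) \<le> R"
      using zero_le_dist[of p "act (u i) p"] zero_le_dist[of p "act (v i) p"] by linarith+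
  qed
  have "0 \<le> R"
    unfolding R_def by (simp add: sum_nonneg)
  define C where "C = B\<^sub>u + B\<^sub>v + 2 * R + 2 * \<delta> + 1"
  have "0 < C"
    unfolding C_def using u(1) v(1) \<open>0 \<le> R\<close> delta_nonneg by linarith
  moreover have "\<exists>S. schottky G act p \<eta> C D S \<and> (\<forall>s\<in>S. finite (Stab G act K p (act s p)))" if "0 < K" for D K
    using schottky_of_separated_translates[OF wpd N u(2,3) v(2,3) R C_def u(1) v(1) \<open>0 \<le> R\<close> that] .
  ultimately show ?thesis
    by blast
qed

end

theorem lemma5p5:
  fixes G :: "('g, 'b) monoid_scheme" and act :: "'g \<Rightarrow> 'x::metric_space \<Rightarrow> 'x"
    and \<delta> :: real and x0 :: 'x and \<eta> :: real
  assumes "group G"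
    and "isometric_action G act"
    and "geodesic_space TYPE('x)"
    and "hyperbolic TYPE('x) \<delta>"
    and "non_elementary G act x0"
    and "\<exists>g. WPD G act x0 g"
    and "0 < \<eta>" and "\<eta> < 1"
  shows "\<exists>C>0. \<forall>D>0. \<forall>K>0. \<exists>S. schottky G act x0 \<eta> C D S \<and>
           (\<forall>s\<in>S. finite (Stab G act K x0 (act s x0)))"
proof -
  interpret hyperbolic_action \<delta> G act
    using assms(1,2,4)
    by (simp add: hyperbolic_action_def hyperbolic_space_def hyperbolic_action_axioms_def)
  obtain g where "WPD G act x0 g"
    using assms(6) by blast
  then show ?thesis
    using exists_schottky_finite_Stab[OF assms(5) _ assms(7)] by blast
qed

end
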